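(* Let $X=\{x_1,\dots,x_m\} \subset \mathbb{R}^n$ be a finite set of vectors, let $\alpha>0$, $\lambda \ge 0$, and $w_{ij} \ge 0$ for $j=2,\dots,m$, $i=1,\dots,j-1$. Let $z^* = \begin{bmatrix}(z_1^* )^T & \dots & (z_m^* )^T\end{bmatrix}^T \in \mathbb{R}^{mn}$ (with each $z_i^* \in \mathbb{R}^n$) be a local optimal solution of \[ \min_{z \in \mathbb{R}^{mn}} \; g(z;\alpha) := \sum_{i=1}^m \|x_i - z_i\|^2 + \lambda \sum_{j=2}^m \sum_{i=1}^{j-1} w_{ij}\Bigl(1 - e^{-\alpha \|z_i - z_j\|^2}\Bigr), \] where $z = \begin{bmatrix} z_1^T & \dots & z_m^T\end{bmatrix}^T$ with $z_i \in \mathbb{R}^n$. Then $z_1^*,\dots,z_m^*$ all lie in the convex hull of $X$.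
   Context: $\|\cdot\|$ denotes the Euclidean norm. *)

theory Defs
  imports "HOL-Analysis.Analysis"
begin

text \<open>Points x_1..x_m and z_1..z_m are indexed 0..m-1. The objective g(z; alpha).\<close>
definition obj_g ::
  "nat \<Rightarrow> (nat \<Rightarrow> real^'n) \<Rightarrow> real \<Rightarrow> (nat \<Rightarrow> nat \<Rightarrow> real) \<Rightarrow> real
   \<Rightarrow> (nat \<Rightarrow> real^'n) \<Rightarrow> real" where
  "obj_g m x lam w \<alpha> z =
     (\<Sum>i<m. (norm (x i - z i))^2)
     + lam * (\<Sum>j<m. \<Sum>i<j. w i j * (1 - exp (- \<alpha> * (norm (z i - z j))^2)))"

definition stacked_dist :: "nat \<Rightarrow> (nat \<Rightarrow> real^'n) \<Rightarrow> (nat \<Rightarrow> real^'n) \<Rightarrow> real" where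
  "stacked_dist m z z' = sqrt (\<Sum>i<m. (norm (z i - z' i))^2)"

definition local_min_stacked ::
  "nat \<Rightarrow> ((nat \<Rightarrow> real^'n) \<Rightarrow> real) \<Rightarrow> (nat \<Rightarrow> real^'n) \<Rightarrow> bool" where
  "local_min_stacked m f z \<longleftrightarrow>
     (\<exists>e>0. \<forall>z'. stacked_dist m z' z < e \<longrightarrow> f z \<le> f z')"

end

theory Submission imports Defs begin

text \<open>If some \<open>z\<^sub>k\<close> lies outside the convex hull \<open>C\<close> of the data, move every \<open>z\<^sub>i\<close> a small
fraction \<open>t\<close> of the way towards its metric projection onto \<open>C\<close>. Since the data points lie
in \<open>C\<close>, each fidelity term \<open>\<parallel>x\<^sub>i - z\<^sub>i\<parallel>\<^sup>2\<close> does not increase, and the one for \<open>z\<^sub>k\<close> strictly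
decreases. Since the projection is nonexpansive, no distance \<open>\<parallel>z\<^sub>i - z\<^sub>j\<parallel>\<close> increases, so no
penalty term \<open>1 - exp (-\<alpha> \<parallel>z\<^sub>i - z\<^sub>j\<parallel>\<^sup>2)\<close> increases. Hence arbitrarily close to \<open>z\<close> the
objective is strictly smaller, contradicting local optimality.\<close>

lemma norm_diff_step_to_closest_point_le:
  fixes S :: "'a::euclidean_space set"
  assumes "convex S" "closed S" "x \<in> S" "0 \<le> t" "t \<le> 1"
  shows "(norm (x - (z + t *\<^sub>R (closest_point S z - z))))\<^sup>2
         \<le> (norm (x - z))\<^sup>2 - t * (norm (closest_point S z - z))\<^sup>2"
proof -
  define p where "p = closest_point S z"
  have obtuse: "inner (x - p) (p - z) \<ge> 0"
    using closest_point_dot[OF assms(1-3), of z]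
    by (simp add: p_def inner_diff_left inner_diff_right inner_commute algebra_simps)
  have "(norm (x - (z + t *\<^sub>R (p - z))))\<^sup>2
      = (norm (x - z))\<^sup>2 - 2 * t * inner (x - p) (p - z) - (2 * t - t\<^sup>2) * (norm (p - z))\<^sup>2"
    unfolding power2_norm_eq_inner
    by (simp add: inner_diff_left inner_diff_right inner_commute algebra_simps power2_eq_square)
  also have "\<dots> \<le> (norm (x - z))\<^sup>2 - t * (norm (p - z))\<^sup>2"
  proof -
    have "t\<^sup>2 * (norm (p - z))\<^sup>2 \<le> t * (norm (p - z))\<^sup>2"
      using assms(4,5) by (intro mult_right_mono) (simp_all add: power2_eq_square mult_left_le_one_le)
    moreover have "t * inner (x - p) (p - z) \<ge> 0"
      using obtuse assms(4) by simp
    ultimately show ?thesis by (simp add: left_diff_distrib)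
  qed
  finally show ?thesis unfolding p_def .
qed

lemma norm_diff_step_to_closest_point_nonexpansive:
  fixes S :: "'a::euclidean_space set"
  assumes "convex S" "closed S" "S \<noteq> {}" "0 \<le> t" "t \<le> 1"
  shows "norm ((a + t *\<^sub>R (closest_point S a - a)) - (b + t *\<^sub>R (closest_point S b - b)))
         \<le> norm (a - b)"
proof -
  have "(a + t *\<^sub>R (closest_point S a - a)) - (b + t *\<^sub>R (closest_point S b - b))
     = (1 - t) *\<^sub>R (a - b) + t *\<^sub>R (closest_point S a - closest_point S b)"
    by (simp add: algebra_simps)
  also have "norm \<dots> \<le> (1 - t) * norm (a - b) + t * norm (closest_point S a - closest_point S b)"
    using assms(4,5) norm_triangle_ineq[of "(1 - t) *\<^sub>R (a - b)" "t *\<^sub>R (closest_point S a - closest_point S b)"]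
    by simp
  also have "\<dots> \<le> (1 - t) * norm (a - b) + t * norm (a - b)"
    using closest_point_lipschitz[OF assms(1-3), of a b] assms(4)
    by (simp add: dist_norm mult_left_mono)
  finally show ?thesis by (simp add: algebra_simps)
qed

lemma stacked_dist_step:
  assumes "t \<ge> 0"
  shows "stacked_dist m (\<lambda>i. z i + t *\<^sub>R d i) z = t * sqrt (\<Sum>i<m. (norm (d i))\<^sup>2)"
  using assms
  by (simp add: stacked_dist_def power_mult_distrib sum_distrib_left[symmetric] real_sqrt_mult)

lemma local_min_stacked_small_step:
  assumes "local_min_stacked m f z"
  obtains t where "0 < t" "t \<le> 1" "f z \<le> f (\<lambda>i. z i + t *\<^sub>R d i)"
proof -
  obtain e where e: "e > 0" "\<And>z'. stacked_dist m z' z < e \<Longrightarrow> f z \<le> f z'"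
    using assms unfolding local_min_stacked_def by blast
  define r where "r = sqrt (\<Sum>i<m. (norm (d i))\<^sup>2)"
  have r: "r \<ge> 0" unfolding r_def by (simp add: sum_nonneg)
  define t where "t = min 1 (e / (2 * (r + 1)))"
  have t: "0 < t" "t \<le> 1" unfolding t_def using e(1) r by auto
  have "t * r \<le> e / (2 * (r + 1)) * (r + 1)"
    unfolding t_def using r t(1) e(1) by (intro mult_mono) auto
  also have "\<dots> < e" using e(1) r by (simp add: field_simps add_pos_nonneg)
  finally have "stacked_dist m (\<lambda>i. z i + t *\<^sub>R d i) z < e"
    using stacked_dist_step[of t m z d] t(1) by (simp add: r_def mult.commute)
  with t e(2) that show ?thesis by blast
qed

lemma obj_g_strict_decrease:
  assumes "\<alpha> \<ge> 0" "lam \<ge> 0" "\<And>i j. i < j \<Longrightarrow> j < m \<Longrightarrow> w i j \<ge> 0"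
    and fidelity: "\<And>i. i < m \<Longrightarrow> norm (x i - z' i) \<le> norm (x i - z i)"
    and "k < m" "norm (x k - z' k) < norm (x k - z k)"
    and pairwise: "\<And>i j. i < j \<Longrightarrow> j < m \<Longrightarrow> norm (z' i - z' j) \<le> norm (z i - z j)"
  shows "obj_g m x lam w \<alpha> z' < obj_g m x lam w \<alpha> z"
proof -
  have "(\<Sum>i<m. (norm (x i - z' i))\<^sup>2) < (\<Sum>i<m. (norm (x i - z i))\<^sup>2)"
  proof (rule sum_strict_mono_ex1)
    show "\<forall>i\<in>{..<m}. (norm (x i - z' i))\<^sup>2 \<le> (norm (x i - z i))\<^sup>2"
      using fidelity by (simp add: power_mono)
    show "\<exists>i\<in>{..<m}. (norm (x i - z' i))\<^sup>2 < (norm (x i - z i))\<^sup>2"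
      using assms(5,6) by (intro bexI[of _ k]) (simp_all add: power_strict_mono)
  qed simp
  moreover have "w i j * (1 - exp (- \<alpha> * (norm (z' i - z' j))\<^sup>2))
              \<le> w i j * (1 - exp (- \<alpha> * (norm (z i - z j))\<^sup>2))"
    if "i < j" "j < m" for i j
  proof -
    have "(norm (z' i - z' j))\<^sup>2 \<le> (norm (z i - z j))\<^sup>2"
      using pairwise[OF that] by (simp add: power_mono)
    then have "- \<alpha> * (norm (z i - z j))\<^sup>2 \<le> - \<alpha> * (norm (z' i - z' j))\<^sup>2"
      using assms(1) by (simp add: mult_left_mono)
    then show ?thesis using assms(3)[OF that] by (intro mult_left_mono) auto
  qed
  then have "(\<Sum>j<m. \<Sum>i<j. w i j * (1 - exp (- \<alpha> * (norm (z' i - z' j))\<^sup>2)))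
           \<le> (\<Sum>j<m. \<Sum>i<j. w i j * (1 - exp (- \<alpha> * (norm (z i - z j))\<^sup>2)))"
    by (intro sum_mono) auto
  then have "lam * (\<Sum>j<m. \<Sum>i<j. w i j * (1 - exp (- \<alpha> * (norm (z' i - z' j))\<^sup>2)))
           \<le> lam * (\<Sum>j<m. \<Sum>i<j. w i j * (1 - exp (- \<alpha> * (norm (z i - z j))\<^sup>2)))"
    using assms(2) by (rule mult_left_mono)
  ultimately show ?thesis unfolding obj_g_def by linarith
qed

theorem proposition1:
  fixes m :: nat and x :: "nat \<Rightarrow> real^'n" and zs :: "nat \<Rightarrow> real^'n"
    and \<alpha> lam :: real and w :: "nat \<Rightarrow> nat \<Rightarrow> real"
  assumes "\<alpha> > 0" and "lam \<ge> 0"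
    and "\<And>i j. i < j \<Longrightarrow> j < m \<Longrightarrow> w i j \<ge> 0"
    and "local_min_stacked m (obj_g m x lam w \<alpha>) zs"
  shows "\<forall>i<m. zs i \<in> convex hull (x ` {..<m})"
proof (rule ccontr)
  define C where "C = convex hull (x ` {..<m})"
  assume "\<not> ?thesis"
  then obtain k where k: "k < m" "zs k \<notin> C" unfolding C_def by blast
  have C: "convex C" "closed C" "C \<noteq> {}"
    using k(1) by (auto simp: C_def compact_imp_closed compact_convex_hull finite_imp_compact)
  have xC: "x i \<in> C" if "i < m" for i using that by (simp add: C_def hull_inc)
  define d where "d i = closest_point C (zs i) - zs i" for i
  obtain t where t: "0 < t" "t \<le> 1"
    and not_better: "obj_g m x lam w \<alpha> zs \<le> obj_g m x lam w \<alpha> (\<lambda>i. zs i + t *\<^sub>R d i)"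
    by (rule local_min_stacked_small_step[OF assms(4)])
  define z' where "z' = (\<lambda>i. zs i + t *\<^sub>R d i)"
  have fidelity: "(norm (x i - z' i))\<^sup>2 \<le> (norm (x i - zs i))\<^sup>2 - t * (norm (d i))\<^sup>2"
    if "i < m" for i
    using norm_diff_step_to_closest_point_le[OF C(1,2) xC[OF that], of t "zs i"] t
    by (simp add: z'_def d_def)
  have "obj_g m x lam w \<alpha> z' < obj_g m x lam w \<alpha> zs"
  proof (rule obj_g_strict_decrease)
    show "norm (x i - z' i) \<le> norm (x i - zs i)" if "i < m" for i
    proof (rule power2_le_imp_le)
      show "(norm (x i - z' i))\<^sup>2 \<le> (norm (x i - zs i))\<^sup>2"
        using fidelity[OF that] t(1) by (smt (verit) mult_nonneg_nonneg zero_le_power2)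
    qed simp
    have "d k \<noteq> 0" using closest_point_refl[OF C(2,3), of "zs k"] k(2) by (simp add: d_def)
    then have "t * (norm (d k))\<^sup>2 > 0" using t(1) by simp
    then have "(norm (x k - z' k))\<^sup>2 < (norm (x k - zs k))\<^sup>2"
      using fidelity[OF k(1)] by linarith
    then show "norm (x k - z' k) < norm (x k - zs k)"
      by (rule power_less_imp_less_base) simp
    show "norm (z' i - z' j) \<le> norm (zs i - zs j)" for i j
      using norm_diff_step_to_closest_point_nonexpansive[OF C, of t "zs i" "zs j"] t
      by (simp add: z'_def d_def)
  qed (use assms(1-3) k(1) in simp_all)
  with not_better show False unfolding z'_def by linarith
qed

end
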